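(* Let $p>a\ge 1$ be integers and let $g_{i,j}\in\{1,-1\}$ for $i=1,\dots,a$ and $j=1,\dots,p-a$. Put $\eta_i'=\sigma_1^{g_{i,1}}\sigma_2^{g_{i,2}}\cdots\sigma_{p-a-1}^{g_{i,p-a-1}}$ and $\eta_i=\eta_i'\,\sigma_{p-a}^{g_{i,p-a}}$, and for $j\ge p-a$ put $\kappa_j=\sigma_{p-a+1}\sigma_{p-a+2}\cdots\sigma_j$ (so $\kappa_{p-a}$ is the empty word). Then the $p$-braid \[\prod_{k=1}^{a}\Big(\eta_k\,\kappa_{p-k}\,\sigma_{p-k+1}^{-1}\sigma_{p-k+2}^{-1}\cdots\sigma_{p-1}^{-1}\Big) =\eta_1\kappa_{p-1}\cdot\eta_2\kappa_{p-2}\sigma_{p-1}^{-1}\cdots\eta_{a-1}\kappa_{p-a+1}\sigma_{p-a+2}^{-1}\cdots\sigma_{p-1}^{-1}\cdot\eta_a\sigma_{p-a+1}^{-1}\cdots\sigma_{p-1}^{-1}\] is Markov equivalent to the braid $\eta_1'\eta_2'\cdots\eta_a'$.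
   Context: $\sigma_1,\sigma_2,\dots$ denote the standard Artin generators of the braid groups. Two braids (possibly with different numbers of strands) are Markov equivalent, written $\sim_M$, if their closures are isotopic links. *)

theory Defs
  imports Main
begin

text \<open>Braid words: a letter k > 0 stands for sigma_k, a letter -k (k > 0) for sigma_k^{-1}.
A word is a word on n strands if all letters satisfy 1 <= |x| <= n - 1.\<close>

definition valid_word :: "nat \<Rightarrow> int list \<Rightarrow> bool" where
  "valid_word n w \<longleftrightarrow> (\<forall>x\<in>set w. 1 \<le> \<bar>x\<bar> \<and> \<bar>x\<bar> \<le> int n - 1)"

inductive braid_step :: "nat \<Rightarrow> int list \<Rightarrow> int list \<Rightarrow> bool" for n where
  cancel: "valid_word n (u @ v) \<Longrightarrow> 1 \<le> \<bar>x\<bar> \<Longrightarrow> \<bar>x\<bar> \<le> int n - 1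
     \<Longrightarrow> braid_step n (u @ v) (u @ [x, -x] @ v)"
| far_comm: "valid_word n (u @ v) \<Longrightarrow> 1 \<le> i \<Longrightarrow> i \<le> int n - 1 \<Longrightarrow> 1 \<le> j \<Longrightarrow> j \<le> int n - 1
     \<Longrightarrow> \<bar>i - j\<bar> \<ge> 2 \<Longrightarrow> braid_step n (u @ [i, j] @ v) (u @ [j, i] @ v)"
| braid_rel: "valid_word n (u @ v) \<Longrightarrow> 1 \<le> i \<Longrightarrow> i + 1 \<le> int n - 1
     \<Longrightarrow> braid_step n (u @ [i, i + 1, i] @ v) (u @ [i + 1, i, i + 1] @ v)"

definition braid_eq :: "nat \<Rightarrow> int list \<Rightarrow> int list \<Rightarrow> bool" where
  "braid_eq n = (symclp (braid_step n))\<^sup>*\<^sup>*"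

inductive markov_step :: "nat \<times> int list \<Rightarrow> nat \<times> int list \<Rightarrow> bool" where
  braid: "braid_step n w w' \<Longrightarrow> markov_step (n, w) (n, w')"
| conj: "n \<ge> 1 \<Longrightarrow> valid_word n (u @ v) \<Longrightarrow> markov_step (n, u @ v) (n, v @ u)"
| stab_pos: "n \<ge> 1 \<Longrightarrow> valid_word n w \<Longrightarrow> markov_step (n, w) (Suc n, w @ [int n])"
| stab_neg: "n \<ge> 1 \<Longrightarrow> valid_word n w \<Longrightarrow> markov_step (n, w) (Suc n, w @ [- int n])"

text \<open>Markov equivalence (by Markov's theorem, equivalent to isotopy of closures).\<close>
definition markov_equiv :: "nat \<times> int list \<Rightarrow> nat \<times> int list \<Rightarrow> bool" where
  "markov_equiv = (symclp markov_step)\<^sup>*\<^sup>*"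

end

(* Let n = p - a.  Rewriting the first a-1 factors on p-1 strands splits off the word
   sigma_(p-1) ... sigma_(n+1) on their right.  This word commutes with eta'_a and, up to
   conjugation by sigma_(p-2) ... sigma_n, turns the letter sigma_n^(+-1) ending eta_a into
   sigma_(p-1)^(+-1).  After a cyclic permutation sigma_(p-1)^(+-1) occurs only once and is
   destabilized; the conjugation cancels, leaving the braid for a-1 factors on p-1 strands
   followed by eta'_a. *)

theory Submission
  imports Defs
begin

definition valid_letter :: "nat \<Rightarrow> int \<Rightarrow> bool" where
  "valid_letter N x \<longleftrightarrow> 1 \<le> \<bar>x\<bar> \<and> \<bar>x\<bar> \<le> int N - 1"

lemma valid_letter_uminus [simp]: "valid_letter N (- x) = valid_letter N x"
  by (simp add: valid_letter_def)

lemma valid_word_Nil [simp]: "valid_word N []"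
  by (simp add: valid_word_def)

lemma valid_word_Cons [simp]: "valid_word N (x # w) \<longleftrightarrow> valid_letter N x \<and> valid_word N w"
  by (auto simp: valid_word_def valid_letter_def)

lemma valid_word_append [simp]: "valid_word N (u @ w) \<longleftrightarrow> valid_word N u \<and> valid_word N w"
  by (auto simp: valid_word_def)

lemma valid_word_concat: "valid_word N (concat ws) \<longleftrightarrow> (\<forall>w\<in>set ws. valid_word N w)"
  by (induct ws) auto

lemma valid_word_mono: "valid_word N w \<Longrightarrow> N \<le> M \<Longrightarrow> valid_word M w"
  by (auto simp: valid_word_def)

section \<open>Equality in the braid group\<close>

lemma braid_eq_refl [simp]: "braid_eq N w w"
  by (simp add: braid_eq_def)

lemma braid_eq_trans [trans]: "braid_eq N u v \<Longrightarrow> braid_eq N v w \<Longrightarrow> braid_eq N u w"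
  unfolding braid_eq_def by (rule rtranclp_trans)

lemma braid_eq_sym: "braid_eq N u v \<Longrightarrow> braid_eq N v u"
  unfolding braid_eq_def by (metis equivp_rtranclp_symclp equivp_symp)

lemma braid_step_append_context:
  assumes "braid_step N w w'" and "valid_word N l" and "valid_word N r"
  shows "braid_step N (l @ w @ r) (l @ w' @ r)"
  using assms(1)
proof cases
  case (cancel u v x)
  then show ?thesis using assms braid_step.cancel[of N "l @ u" "v @ r" x] by simp
next
  case (far_comm u v i j)
  then show ?thesis using assms braid_step.far_comm[of N "l @ u" "v @ r" i j] by simp
next
  case (braid_rel u v i)
  then show ?thesis using assms braid_step.braid_rel[of N "l @ u" "v @ r" i] by simp
qed

lemma braid_eq_append_context:
  "braid_eq N w w' \<Longrightarrow> valid_word N l \<Longrightarrow> valid_word N r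
   \<Longrightarrow> braid_eq N (l @ w @ r) (l @ w' @ r)"
  unfolding braid_eq_def
proof (induction rule: rtranclp_induct)
  case (step y z)
  then have "symclp (braid_step N) (l @ y @ r) (l @ z @ r)"
    using braid_step_append_context by (auto simp: symclp_def)
  with step show ?case by (auto intro: rtranclp.rtrancl_into_rtrancl)
qed simp

lemma braid_eq_cancel: "valid_letter N x \<Longrightarrow> braid_eq N [x, -x] []"
  using braid_step.cancel[of N "[]" "[]" x]
  by (auto simp: valid_letter_def braid_eq_def intro: braid_eq_sym)

lemma braid_eq_conj_inverse:
  assumes "valid_letter N x" "valid_letter N y" "valid_word N X"
    and "braid_eq N (X @ [x]) ([y] @ X)"
  shows "braid_eq N (X @ [-x]) ([-y] @ X)"
proof -
  have "braid_eq N (X @ [-x]) ([] @ [-y, y] @ (X @ [-x]))"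
    using braid_eq_sym[OF braid_eq_append_context[OF braid_eq_cancel[of N "-y"], of "[]" "X @ [-x]"]]
      assms by simp
  also have "[] @ [-y, y] @ (X @ [-x]) = [-y] @ ([y] @ X) @ [-x]" by simp
  also have "braid_eq N \<dots> ([-y] @ (X @ [x]) @ [-x])"
    using braid_eq_append_context[OF braid_eq_sym[OF assms(4)], of "[-y]" "[-x]"] assms by simp
  also have "[-y] @ (X @ [x]) @ [-x] = ([-y] @ X) @ [x, -x] @ []" by simp
  also have "braid_eq N \<dots> (([-y] @ X) @ [] @ [])"
    using braid_eq_append_context[OF braid_eq_cancel[of N x], of "[-y] @ X" "[]"] assms by simp
  finally show ?thesis by simp
qed

definition distant :: "int \<Rightarrow> int \<Rightarrow> bool" where
  "distant x y \<longleftrightarrow> \<bar>x\<bar> + 2 \<le> \<bar>y\<bar> \<or> \<bar>y\<bar> + 2 \<le> \<bar>x\<bar>"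

lemma braid_eq_commute_distant_positive:
  "valid_letter N i \<Longrightarrow> valid_letter N j \<Longrightarrow> 0 < i \<Longrightarrow> 0 < j \<Longrightarrow> distant i j
   \<Longrightarrow> braid_eq N [i, j] [j, i]"
  using braid_step.far_comm[of N "[]" "[]" i j]
  by (auto simp: valid_letter_def distant_def braid_eq_def)

lemma braid_eq_commute_distant:
  assumes "valid_letter N x" "valid_letter N y" "distant x y"
  shows "braid_eq N [x, y] [y, x]"
proof -
  have all_signs: "braid_eq N [i, j] [j, i] \<and> braid_eq N [i, -j] [-j, i]
      \<and> braid_eq N [-i, j] [j, -i] \<and> braid_eq N [-i, -j] [-j, -i]"
    if "valid_letter N i" "valid_letter N j" "0 < i" "0 < j" "distant i j" for i j
  proof -
    have ij: "braid_eq N [i, j] [j, i]" and ji: "braid_eq N [j, i] [i, j]"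
      using braid_eq_commute_distant_positive that by (auto simp: distant_def)
    have "braid_eq N [i, -j] [-j, i]"
      using braid_eq_conj_inverse[of N j j "[i]"] ij that by simp
    moreover have ji': "braid_eq N [j, -i] [-i, j]"
      using braid_eq_conj_inverse[of N i i "[j]"] ji that by simp
    moreover have "braid_eq N [-i, -j] [-j, -i]"
      using braid_eq_conj_inverse[of N j j "[-i]"] braid_eq_sym[OF ji'] that by simp
    ultimately show ?thesis using ij braid_eq_sym[OF ji'] by simp
  qed
  have "valid_letter N \<bar>x\<bar>" "valid_letter N \<bar>y\<bar>" "0 < \<bar>x\<bar>" "0 < \<bar>y\<bar>" "distant \<bar>x\<bar> \<bar>y\<bar>"
    using assms by (auto simp: distant_def valid_letter_def)
  from all_signs[OF this] show ?thesis
    by (cases "0 \<le> x"; cases "0 \<le> y") (auto simp: abs_if split: if_splits)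
qed

lemma braid_eq_commute_distant_letter_word:
  "valid_letter N x \<Longrightarrow> valid_word N w \<Longrightarrow> \<forall>y\<in>set w. distant x y
   \<Longrightarrow> braid_eq N ([x] @ w) (w @ [x])"
proof (induction w)
  case (Cons y w)
  have "braid_eq N ([x] @ y # w) ([] @ [y, x] @ w)"
    using braid_eq_append_context[OF braid_eq_commute_distant[of N x y], of "[]" w] Cons.prems
    by simp
  also have "[] @ [y, x] @ w = [y] @ ([x] @ w) @ []" by simp
  also have "braid_eq N \<dots> ([y] @ (w @ [x]) @ [])"
    using braid_eq_append_context[OF Cons.IH, of "[y]" "[]"] Cons.prems by simp
  finally show ?case by simp
qed simp

lemma braid_eq_commute_distant_words:
  "valid_word N u \<Longrightarrow> valid_word N w \<Longrightarrow> \<forall>x\<in>set u. \<forall>y\<in>set w. distant x y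
   \<Longrightarrow> braid_eq N (u @ w) (w @ u)"
proof (induction u)
  case (Cons x u)
  have "braid_eq N ((x # u) @ w) ([x] @ (w @ u) @ [])"
    using braid_eq_append_context[OF Cons.IH, of "[x]" "[]"] Cons.prems by simp
  also have "[x] @ (w @ u) @ [] = [] @ ([x] @ w) @ u" by simp
  also have "braid_eq N \<dots> ([] @ (w @ [x]) @ u)"
    using braid_eq_append_context[OF braid_eq_commute_distant_letter_word[of N x w], of "[]" u]
      Cons.prems by simp
  finally show ?case by simp
qed simp

section \<open>Monotone words in the generators\<close>

definition sigma_desc :: "nat \<Rightarrow> nat \<Rightarrow> int list" where
  "sigma_desc i j = rev (map int [i..<j])"

definition sigma_asc :: "nat \<Rightarrow> nat \<Rightarrow> int list" where
  "sigma_asc i j = map int [i..<j]"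

definition sigma_desc_inv :: "nat \<Rightarrow> nat \<Rightarrow> int list" where
  "sigma_desc_inv i j = map (\<lambda>m. - int m) [i..<j]"

lemma set_sigma_desc [simp]: "set (sigma_desc i j) = int ` {i..<j}"
  by (simp add: sigma_desc_def)

lemma set_sigma_asc [simp]: "set (sigma_asc i j) = int ` {i..<j}"
  by (simp add: sigma_asc_def)

lemma sigma_desc_empty [simp]: "j \<le> i \<Longrightarrow> sigma_desc i j = []"
  by (simp add: sigma_desc_def)

lemma sigma_desc_inv_empty [simp]: "j \<le> i \<Longrightarrow> sigma_desc_inv i j = []"
  by (simp add: sigma_desc_inv_def)

lemma sigma_asc_empty [simp]: "j \<le> i \<Longrightarrow> sigma_asc i j = []"
  by (simp add: sigma_asc_def)

lemma sigma_desc_Suc: "i \<le> j \<Longrightarrow> sigma_desc i (Suc j) = int j # sigma_desc i j"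
  by (simp add: sigma_desc_def)

lemma sigma_desc_inv_Suc: "i \<le> j \<Longrightarrow> sigma_desc_inv i (Suc j) = sigma_desc_inv i j @ [- int j]"
  by (simp add: sigma_desc_inv_def)

lemma sigma_asc_Suc: "i \<le> j \<Longrightarrow> sigma_asc i (Suc j) = sigma_asc i j @ [int j]"
  by (simp add: sigma_asc_def)

lemma sigma_desc_low: "i < j \<Longrightarrow> sigma_desc i j = sigma_desc (Suc i) j @ [int i]"
  by (simp add: sigma_desc_def upt_conv_Cons)

lemma valid_sigma_desc: "1 \<le> i \<Longrightarrow> j \<le> N \<Longrightarrow> valid_word N (sigma_desc i j)"
  by (auto simp: valid_word_def)

lemma valid_sigma_asc: "1 \<le> i \<Longrightarrow> j \<le> N \<Longrightarrow> valid_word N (sigma_asc i j)"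
  by (auto simp: valid_word_def)

lemma valid_sigma_desc_inv: "1 \<le> i \<Longrightarrow> j \<le> N \<Longrightarrow> valid_word N (sigma_desc_inv i j)"
  by (auto simp: valid_word_def sigma_desc_inv_def)

lemma braid_eq_sigma_desc_inv_desc:
  "1 \<le> i \<Longrightarrow> j \<le> N \<Longrightarrow> braid_eq N (sigma_desc_inv i j @ sigma_desc i j) []"
proof (induction j)
  case (Suc j)
  show ?case
  proof (cases "i \<le> j")
    case True
    have "sigma_desc_inv i (Suc j) @ sigma_desc i (Suc j)
        = sigma_desc_inv i j @ [- int j, - (- int j)] @ sigma_desc i j"
      using True by (simp add: sigma_desc_inv_Suc sigma_desc_Suc)
    also have "braid_eq N \<dots> (sigma_desc_inv i j @ [] @ sigma_desc i j)"
      using Suc.prems True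
      by (intro braid_eq_append_context braid_eq_cancel valid_sigma_desc_inv valid_sigma_desc)
        (auto simp: valid_letter_def)
    also have "braid_eq N \<dots> []" using Suc by simp
    finally show ?thesis .
  qed simp
qed simp

lemma braid_eq_sigma_desc_desc_inv:
  "1 \<le> i \<Longrightarrow> j \<le> N \<Longrightarrow> braid_eq N (sigma_desc i j @ sigma_desc_inv i j) []"
proof (induction j)
  case (Suc j)
  show ?case
  proof (cases "i \<le> j")
    case True
    have letter: "valid_letter N (int j)" using Suc.prems True by (simp add: valid_letter_def)
    have "sigma_desc i (Suc j) @ sigma_desc_inv i (Suc j)
        = [int j] @ (sigma_desc i j @ sigma_desc_inv i j) @ [- int j]"
      using True by (simp add: sigma_desc_inv_Suc sigma_desc_Suc)
    also have "braid_eq N \<dots> ([int j] @ [] @ [- int j])"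
      using Suc letter by (intro braid_eq_append_context) auto
    also have "braid_eq N \<dots> []" using braid_eq_cancel[OF letter] by simp
    finally show ?thesis .
  qed simp
qed simp

text \<open>The word \<open>X = \<sigma>\<^bsub>t-1\<^esub>\<cdots>\<sigma>\<^sub>i \<sigma>\<^sub>t\<cdots>\<sigma>\<^bsub>i+1\<^esub>\<close> conjugates
  \<open>\<sigma>\<^sub>i\<close> to \<open>\<sigma>\<^sub>t\<close>: each braid relation moves the index up by one.\<close>

lemma braid_eq_sigma_desc_pair_conj:
  "1 \<le> i \<Longrightarrow> i \<le> t \<Longrightarrow> t < N \<Longrightarrow>
   braid_eq N (sigma_desc i t @ sigma_desc (Suc i) (Suc t) @ [int i])
              ([int t] @ sigma_desc i t @ sigma_desc (Suc i) (Suc t))"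
proof (induction "t - i" arbitrary: i)
  case (Suc d)
  then have it: "i < t" by simp
  let ?U = "sigma_desc (Suc i) t" and ?V = "sigma_desc (Suc (Suc i)) (Suc t)"
  have IH: "braid_eq N (?U @ ?V @ [int (Suc i)]) ([int t] @ ?U @ ?V)"
    using Suc.hyps(1)[of "Suc i"] Suc.hyps(2) Suc.prems it by simp
  have valid: "valid_word N ?U" "valid_word N ?V"
    using Suc.prems by (auto intro: valid_sigma_desc)
  have letters: "valid_letter N (int i)" "valid_letter N (int i + 1)" "valid_letter N (int t)"
    using Suc.prems it by (auto simp: valid_letter_def)
  have comm: "braid_eq N ([int i] @ ?V) (?V @ [int i])"
    using letters valid by (intro braid_eq_commute_distant_letter_word) (auto simp: distant_def)
  have "sigma_desc i t @ sigma_desc (Suc i) (Suc t) @ [int i]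
      = ?U @ ([int i] @ ?V) @ [int i + 1, int i]"
    using it by (simp add: sigma_desc_low[of i t] sigma_desc_low[of "Suc i" "Suc t"])
  also have "braid_eq N \<dots> (?U @ (?V @ [int i]) @ [int i + 1, int i])"
    using letters valid by (intro braid_eq_append_context[OF comm]) auto
  also have "\<dots> = (?U @ ?V) @ [int i, int i + 1, int i] @ []" by simp
  also have "braid_eq N \<dots> ((?U @ ?V) @ [int i + 1, int i, int i + 1] @ [])"
    using braid_step.braid_rel[of N "[]" "[]" "int i"] Suc.prems it valid
    by (intro braid_eq_append_context) (auto simp: braid_eq_def)
  also have "\<dots> = [] @ (?U @ ?V @ [int (Suc i)]) @ [int i, int i + 1]" by simp
  also have "braid_eq N \<dots> ([] @ ([int t] @ ?U @ ?V) @ [int i, int i + 1])"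
    using letters by (intro braid_eq_append_context[OF IH]) auto
  also have "\<dots> = ([int t] @ ?U) @ (?V @ [int i]) @ [int i + 1]" by simp
  also have "braid_eq N \<dots> (([int t] @ ?U) @ ([int i] @ ?V) @ [int i + 1])"
    using letters valid by (intro braid_eq_append_context[OF braid_eq_sym[OF comm]]) auto
  also have "\<dots> = [int t] @ sigma_desc i t @ sigma_desc (Suc i) (Suc t)"
    using it by (simp add: sigma_desc_low[of i t] sigma_desc_low[of "Suc i" "Suc t"])
  finally show ?case .
qed simp

lemma braid_eq_sigma_desc_conj_letter:
  assumes "1 \<le> i" "i \<le> t" "t < N" "s = 1 \<or> s = -1"
  shows "braid_eq N (sigma_desc (Suc i) (Suc t) @ [s * int i] @ sigma_desc_inv (Suc i) (Suc t))
                    (sigma_desc_inv i t @ [s * int t] @ sigma_desc i t)"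
proof -
  define X where "X = sigma_desc i t @ sigma_desc (Suc i) (Suc t)"
  have valid: "valid_word N X" "valid_word N (sigma_desc_inv i t)"
    "valid_word N (sigma_desc_inv (Suc i) (Suc t))" "valid_word N (sigma_desc i t)"
    using assms by (auto simp: X_def intro: valid_sigma_desc valid_sigma_desc_inv)
  have letters: "valid_letter N (int i)" "valid_letter N (int t)"
    "valid_letter N (s * int i)" "valid_letter N (s * int t)"
    using assms by (auto simp: valid_letter_def)
  have "braid_eq N (X @ [int i]) ([int t] @ X)"
    using braid_eq_sigma_desc_pair_conj[OF assms(1-3)] by (simp add: X_def)
  then have conj: "braid_eq N (X @ [s * int i]) ([s * int t] @ X)"
    using assms(4) braid_eq_conj_inverse[of N "int i" "int t" X] letters valid by auto
  have "sigma_desc (Suc i) (Suc t) @ [s * int i] @ sigma_desc_inv (Suc i) (Suc t)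
      = [] @ [] @ (sigma_desc (Suc i) (Suc t) @ [s * int i] @ sigma_desc_inv (Suc i) (Suc t))"
    by simp
  also have "braid_eq N \<dots> ([] @ (sigma_desc_inv i t @ sigma_desc i t)
      @ (sigma_desc (Suc i) (Suc t) @ [s * int i] @ sigma_desc_inv (Suc i) (Suc t)))"
    using assms valid letters
    by (intro braid_eq_append_context braid_eq_sym[OF braid_eq_sigma_desc_inv_desc])
      (auto simp: X_def)
  also have "\<dots> = sigma_desc_inv i t @ (X @ [s * int i]) @ sigma_desc_inv (Suc i) (Suc t)"
    by (simp add: X_def)
  also have "braid_eq N \<dots> (sigma_desc_inv i t @ ([s * int t] @ X) @ sigma_desc_inv (Suc i) (Suc t))"
    using valid by (intro braid_eq_append_context[OF conj])
  also have "\<dots> = (sigma_desc_inv i t @ [s * int t] @ sigma_desc i t)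
      @ (sigma_desc (Suc i) (Suc t) @ sigma_desc_inv (Suc i) (Suc t)) @ []"
    by (simp add: X_def)
  also have "braid_eq N \<dots> ((sigma_desc_inv i t @ [s * int t] @ sigma_desc i t) @ [] @ [])"
    using assms valid letters
    by (intro braid_eq_append_context braid_eq_sigma_desc_desc_inv) auto
  finally show ?thesis by simp
qed

lemma braid_eq_sigma_desc_conj_low_word:
  assumes "1 \<le> i" "i \<le> t" "t < N" "s = 1 \<or> s = -1" "valid_word i B"
  shows "braid_eq N (sigma_desc (Suc i) (Suc t) @ B @ [s * int i] @ sigma_desc_inv (Suc i) (Suc t))
                    (B @ sigma_desc_inv i t @ [s * int t] @ sigma_desc i t)"
proof -
  have valid: "valid_word N B" "valid_word N (sigma_desc (Suc i) (Suc t))"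
    "valid_word N (sigma_desc_inv (Suc i) (Suc t))" "valid_letter N (s * int i)"
    using assms valid_word_mono[OF assms(5)]
    by (auto intro: valid_sigma_desc valid_sigma_desc_inv simp: valid_letter_def)
  have "\<forall>x\<in>set (sigma_desc (Suc i) (Suc t)). \<forall>y\<in>set B. distant x y"
    using assms(5) by (auto simp: distant_def valid_word_def)
  then have "braid_eq N ([] @ (sigma_desc (Suc i) (Suc t) @ B) @ ([s * int i] @ sigma_desc_inv (Suc i) (Suc t)))
      ([] @ (B @ sigma_desc (Suc i) (Suc t)) @ ([s * int i] @ sigma_desc_inv (Suc i) (Suc t)))"
    using valid by (intro braid_eq_append_context braid_eq_commute_distant_words) auto
  also have "\<dots> = B @ (sigma_desc (Suc i) (Suc t) @ [s * int i] @ sigma_desc_inv (Suc i) (Suc t)) @ []"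
    by simp
  also have "braid_eq N \<dots> (B @ (sigma_desc_inv i t @ [s * int t] @ sigma_desc i t) @ [])"
    using valid by (intro braid_eq_append_context braid_eq_sigma_desc_conj_letter assms) auto
  finally show ?thesis by simp
qed

section \<open>Markov equivalence\<close>

lemma markov_equiv_refl [simp]: "markov_equiv x x"
  by (simp add: markov_equiv_def)

lemma markov_equiv_trans [trans]:
  "markov_equiv x y \<Longrightarrow> markov_equiv y z \<Longrightarrow> markov_equiv x z"
  unfolding markov_equiv_def by (rule rtranclp_trans)

lemma markov_equiv_sym: "markov_equiv x y \<Longrightarrow> markov_equiv y x"
  unfolding markov_equiv_def by (metis equivp_rtranclp_symclp equivp_symp)

lemma markov_step_imp_equiv: "markov_step x y \<Longrightarrow> markov_equiv x y"
  unfolding markov_equiv_def by (simp add: r_into_rtranclp symclpI1)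

lemma braid_eq_imp_markov_equiv: "braid_eq N u v \<Longrightarrow> markov_equiv (N, u) (N, v)"
  unfolding braid_eq_def
proof (induction rule: rtranclp_induct)
  case (step y z)
  then have "markov_equiv (N, y) (N, z)"
    by (auto simp: symclp_def intro: markov_step_imp_equiv markov_equiv_sym markov_step.braid)
  with step.IH show ?case by (rule markov_equiv_trans)
qed simp

lemma markov_equiv_conj:
  "1 \<le> N \<Longrightarrow> valid_word N (u @ v) \<Longrightarrow> markov_equiv (N, u @ v) (N, v @ u)"
  by (intro markov_step_imp_equiv markov_step.conj)

lemma markov_equiv_destabilize:
  assumes "1 \<le> N" "valid_word N (u @ v)" "x = int N \<or> x = - int N"
  shows "markov_equiv (Suc N, u @ [x] @ v) (N, u @ v)"
proof -
  have "valid_word N (v @ u)" using assms(2) by simp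
  then have stabilization: "markov_step (N, v @ u) (Suc N, (v @ u) @ [x])"
    using assms(1,3) markov_step.stab_pos markov_step.stab_neg by blast
  have "valid_word (Suc N) ((u @ [x]) @ v)"
    using assms valid_word_mono[OF assms(2)] by (auto simp: valid_letter_def)
  then have "markov_equiv (Suc N, (u @ [x]) @ v) (Suc N, v @ u @ [x])"
    by (rule markov_equiv_conj[rotated]) simp
  also have "\<dots> = (Suc N, (v @ u) @ [x])" by simp
  also have "markov_equiv \<dots> (N, v @ u)"
    by (rule markov_equiv_sym[OF markov_step_imp_equiv[OF stabilization]])
  also have "markov_equiv \<dots> (N, u @ v)"
    using assms by (intro markov_equiv_conj) auto
  finally show ?thesis by simp
qed

section \<open>Products of the factors\<close>

text \<open>\<open>factor E g n q k\<close> is the word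
  \<open>\<eta>\<^sub>k \<kappa>\<^bsub>q-k\<^esub> \<sigma>\<^bsub>q-k+1\<^esub>\<^sup>-\<^sup>1\<cdots>\<sigma>\<^bsub>q-1\<^esub>\<^sup>-\<^sup>1\<close> on \<open>q\<close> strands,
  where \<open>\<eta>\<^sub>k = E k \<cdot> \<sigma>\<^sub>n\<^bsup>g k\<^esup>\<close>; the theorem is the case \<open>q = p\<close>, \<open>n = p - a\<close>.\<close>

definition factor :: "(nat \<Rightarrow> int list) \<Rightarrow> (nat \<Rightarrow> int) \<Rightarrow> nat \<Rightarrow> nat \<Rightarrow> nat \<Rightarrow> int list" where
  "factor E g n q k = E k @ [g k * int n] @ sigma_asc (n + 1) (q - k + 1) @ sigma_desc_inv (q - k + 1) q"

definition factors :: "(nat \<Rightarrow> int list) \<Rightarrow> (nat \<Rightarrow> int) \<Rightarrow> nat \<Rightarrow> nat \<Rightarrow> nat \<Rightarrow> int list" where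
  "factors E g n q m = concat (map (factor E g n q) [1..<m + 1])"

lemma factors_Suc: "factors E g n q (Suc m) = factors E g n q m @ factor E g n q (Suc m)"
  by (simp add: factors_def)

definition admissible :: "nat \<Rightarrow> (nat \<Rightarrow> int list) \<Rightarrow> (nat \<Rightarrow> int) \<Rightarrow> nat \<Rightarrow> bool" where
  "admissible n E g m \<longleftrightarrow> (\<forall>k\<in>{1..m}. valid_word n (E k) \<and> (g k = 1 \<or> g k = -1))"

lemma admissible_Suc:
  "admissible n E g (Suc m) \<longleftrightarrow> admissible n E g m \<and> valid_word n (E (Suc m)) \<and> (g (Suc m) = 1 \<or> g (Suc m) = -1)"
  by (auto simp: admissible_def atLeastAtMostSuc_conv)

lemma valid_factors:
  assumes "1 \<le> n" "m + n \<le> q" "admissible n E g m" "q \<le> N"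
  shows "valid_word N (factors E g n q m)"
  unfolding factors_def valid_word_concat
proof
  fix w assume "w \<in> set (map (factor E g n q) [1..<m + 1])"
  then obtain k where k: "1 \<le> k" "k \<le> m" "w = factor E g n q k" by auto
  with assms have "valid_word n (E k)" "g k = 1 \<or> g k = -1"
    by (auto simp: admissible_def)
  moreover have "n \<le> N" using assms k by simp
  ultimately have "valid_word N (E k)" "g k = 1 \<or> g k = -1"
    using valid_word_mono by auto
  with assms k show "valid_word N w"
    by (auto simp: factor_def valid_letter_def intro!: valid_sigma_asc valid_sigma_desc_inv)
qed

lemma braid_eq_factors_remove_strand:
  assumes "1 \<le> n" "m + n \<le> q" "admissible n E g m"
  shows "braid_eq (Suc q) (factors E g n (Suc q) m)
           (factors E g n q m @ sigma_desc (Suc q - m) (Suc q))"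
  using assms
proof (induction m)
  case (Suc m)
  define i where "i = q - m"
  have i: "n + 1 \<le> i" "i \<le> q" using Suc.prems by (auto simp: i_def)
  have E: "valid_word n (E (Suc m))" "g (Suc m) = 1 \<or> g (Suc m) = -1"
    using Suc.prems by (auto simp: admissible_Suc)
  define B where "B = E (Suc m) @ [g (Suc m) * int n] @ sigma_asc (n + 1) i"
  have valid_B: "valid_word i B"
    using E i valid_word_mono[OF E(1)] Suc.prems
    by (auto simp: B_def valid_letter_def intro!: valid_sigma_asc)
  have factor_Suc_q: "factor E g n (Suc q) (Suc m) = B @ [1 * int i] @ sigma_desc_inv (Suc i) (Suc q)"
    using i by (simp add: factor_def B_def sigma_asc_Suc Suc_diff_le i_def)
  have factor_q: "factor E g n q (Suc m) = B @ sigma_desc_inv i q"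
    using i Suc.prems by (simp add: factor_def B_def i_def Suc_diff_Suc)
  have valid: "valid_word (Suc q) (factors E g n q m)"
    "valid_word (Suc q) (B @ [1 * int i] @ sigma_desc_inv (Suc i) (Suc q))"
    using Suc.prems i valid_word_mono[OF valid_B]
    by (auto simp: admissible_Suc valid_letter_def intro!: valid_factors valid_sigma_desc_inv)
  have "factors E g n (Suc q) (Suc m) = [] @ factors E g n (Suc q) m @ factor E g n (Suc q) (Suc m)"
    by (simp add: factors_Suc)
  also have "braid_eq (Suc q) \<dots>
      ([] @ (factors E g n q m @ sigma_desc (Suc i) (Suc q)) @ factor E g n (Suc q) (Suc m))"
    using Suc valid factor_Suc_q i
    by (intro braid_eq_append_context) (auto simp: admissible_Suc i_def Suc_diff_le)
  also have "\<dots> = factors E g n q m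
      @ (sigma_desc (Suc i) (Suc q) @ B @ [1 * int i] @ sigma_desc_inv (Suc i) (Suc q)) @ []"
    by (simp add: factor_Suc_q)
  also have "braid_eq (Suc q) \<dots>
      (factors E g n q m @ (B @ sigma_desc_inv i q @ [1 * int q] @ sigma_desc i q) @ [])"
    using valid i valid_B Suc.prems
    by (intro braid_eq_append_context braid_eq_sigma_desc_conj_low_word) auto
  also have "\<dots> = factors E g n q (Suc m) @ sigma_desc (Suc q - Suc m) (Suc q)"
    using i by (simp add: factors_Suc factor_q sigma_desc_Suc i_def)
  finally show ?case .
qed (simp add: factors_def)

lemma braid_eq_factors_split_last:
  assumes "1 \<le> n" "a + n = q" "admissible n E g (Suc a)"
  shows "braid_eq (Suc q) (factors E g n (Suc q) (Suc a))
           (factors E g n q a @ E (Suc a) @ sigma_desc_inv n q @ [g (Suc a) * int q] @ sigma_desc n q)"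
proof -
  let ?E = "E (Suc a)" and ?s = "g (Suc a)"
  have E: "valid_word n ?E" "?s = 1 \<or> ?s = -1" "admissible n E g a"
    using assms by (auto simp: admissible_Suc)
  have valid: "valid_word (Suc q) (factors E g n q a)"
    "valid_word (Suc q) (?E @ [?s * int n] @ sigma_desc_inv (Suc n) (Suc q))"
    using assms E valid_word_mono[OF E(1), of "Suc q"]
    by (auto simp: valid_letter_def intro!: valid_factors valid_sigma_desc_inv)
  have "factors E g n (Suc q) (Suc a)
      = [] @ factors E g n (Suc q) a @ (?E @ [?s * int n] @ sigma_desc_inv (Suc n) (Suc q))"
    using assms(2)[symmetric] by (simp add: factors_Suc factor_def)
  also have "braid_eq (Suc q) \<dots> ([] @ (factors E g n q a @ sigma_desc (Suc n) (Suc q))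
      @ (?E @ [?s * int n] @ sigma_desc_inv (Suc n) (Suc q)))"
    using assms E valid braid_eq_factors_remove_strand[of n a q E g]
    by (intro braid_eq_append_context) auto
  also have "\<dots> = factors E g n q a @ (sigma_desc (Suc n) (Suc q) @ ?E @ [?s * int n]
      @ sigma_desc_inv (Suc n) (Suc q)) @ []"
    by simp
  also have "braid_eq (Suc q) \<dots>
      (factors E g n q a @ (?E @ sigma_desc_inv n q @ [?s * int q] @ sigma_desc n q) @ [])"
    using assms E valid by (intro braid_eq_append_context braid_eq_sigma_desc_conj_low_word) auto
  finally show ?thesis by simp
qed

text \<open>The last factor now contributes the only letter \<open>\<sigma>\<^sub>q\<^sup>\<plusminus>\<^sup>1\<close>; it is destabilized,
  after which its conjugating words cancel.\<close>

lemma markov_equiv_factors: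
  assumes "1 \<le> n" "admissible n E g a" "valid_word n T"
  shows "markov_equiv (n + a, factors E g n (n + a) a @ T) (n, concat (map E [1..<a + 1]) @ T)"
  using assms
proof (induction a arbitrary: T)
  case (Suc a)
  define q where "q = n + a"
  let ?Pre = "factors E g n q a @ E (Suc a)" and ?s = "g (Suc a)"
  have E: "valid_word n (E (Suc a))" "?s = 1 \<or> ?s = -1" "admissible n E g a"
    using Suc.prems by (auto simp: admissible_Suc)
  have valid: "valid_word q ?Pre" "valid_word q T"
    "valid_word q (sigma_desc_inv n q)" "valid_word q (sigma_desc n q)"
    using Suc.prems E valid_word_mono[of n _ q]
    by (auto simp: q_def intro!: valid_factors valid_sigma_desc_inv valid_sigma_desc)
  have "braid_eq (Suc q) (factors E g n (Suc q) (Suc a) @ T)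
      (((?Pre @ sigma_desc_inv n q) @ [?s * int q] @ sigma_desc n q) @ T)"
    using braid_eq_append_context[OF braid_eq_factors_split_last[of n a q E g], of "[]" T]
      Suc.prems valid valid_word_mono[of q _ "Suc q"] by (simp add: q_def)
  then have "markov_equiv (Suc q, factors E g n (Suc q) (Suc a) @ T)
      (Suc q, (?Pre @ sigma_desc_inv n q) @ [?s * int q] @ (sigma_desc n q @ T))"
    by (intro braid_eq_imp_markov_equiv) simp
  also have "markov_equiv \<dots> (q, ?Pre @ (sigma_desc_inv n q @ sigma_desc n q) @ T)"
    using markov_equiv_destabilize[of q "?Pre @ sigma_desc_inv n q" "sigma_desc n q @ T" "?s * int q"]
      valid Suc.prems E by (auto simp: q_def)
  also have "markov_equiv \<dots> (q, ?Pre @ [] @ T)"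
    using valid Suc.prems
    by (intro braid_eq_imp_markov_equiv braid_eq_append_context braid_eq_sigma_desc_inv_desc) auto
  also have "\<dots> = (n + a, factors E g n (n + a) a @ (E (Suc a) @ T))"
    by (simp add: q_def)
  also have "markov_equiv \<dots> (n, concat (map E [1..<a + 1]) @ (E (Suc a) @ T))"
    using Suc.prems E by (intro Suc.IH) auto
  finally show ?case by (simp add: q_def)
qed (simp add: factors_def)

theorem lemma3p1:
  fixes p a :: nat and g :: "nat \<Rightarrow> nat \<Rightarrow> int"
  assumes "1 \<le> a" and "a < p"
    and "\<forall>i\<in>{1..a}. \<forall>j\<in>{1..p - a}. g i j = 1 \<or> g i j = -1"
  shows "let eta' = (\<lambda>i. map (\<lambda>j. g i j * int j) [1..<p - a]);
             eta = (\<lambda>i. eta' i @ [g i (p - a) * int (p - a)]);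
             kappa = (\<lambda>j. map int [p - a + 1..<j + 1]);
             tl_inv = (\<lambda>k. map (\<lambda>m. - int m) [p - k + 1..<p])
         in markov_equiv
              (p, concat (map (\<lambda>k. eta k @ kappa (p - k) @ tl_inv k) [1..<a + 1]))
              (p - a, concat (map eta' [1..<a + 1]))"
proof -
  define n where "n = p - a"
  define E where "E = (\<lambda>i. map (\<lambda>j. g i j * int j) [1..<n])"
  have n: "1 \<le> n" "n + a = p" using assms by (auto simp: n_def)
  have "admissible n E (\<lambda>k. g k n) a"
    unfolding admissible_def
  proof
    fix k assume k: "k \<in> {1..a}"
    then have signs: "g k j = 1 \<or> g k j = -1" if "1 \<le> j" "j \<le> n" for j
      using assms(3) that by (simp add: n_def)
    then have "valid_word n (E k)"
      by (force simp: E_def valid_word_def)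
    with signs n show "valid_word n (E k) \<and> (g k n = 1 \<or> g k n = -1)" by simp
  qed
  then have "markov_equiv (p, factors E (\<lambda>k. g k n) n p a @ []) (n, concat (map E [1..<a + 1]) @ [])"
    using markov_equiv_factors[of n E _ a "[]"] n by simp
  then show ?thesis
    by (simp add: Let_def factors_def factor_def[abs_def] sigma_asc_def sigma_desc_inv_def E_def n_def
        del: upt_Suc)
qed

end
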